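(* For all $n\ge1$, $a_{\{0102,0121\}}(n)=\frac12\left(3\cdot2^n-n^2-n-2\right)$.
   Context: An ascent in an integer sequence $s_1\cdots s_m$ is an index $j$ with $s_j<s_{j+1}$; $\mathrm{asc}$ denotes the number of ascents. An ascent sequence is a sequence $x_1\cdots x_n$ of nonnegative integers with $x_1=0$ and $x_i\le 1+\mathrm{asc}(x_1\cdots x_{i-1})$ for all $i\ge2$. The reduction $\mathrm{red}(w)$ of an integer sequence $w$ replaces the $i$-th smallest distinct letter of $w$ by $i-1$; a pattern is a reduced sequence. A sequence $x$ contains a pattern $p=p_1\cdots p_k$ if there are indices $i_1<\cdots<i_k$ with $\mathrm{red}(x_{i_1}\cdots x_{i_k})=p$; otherwise $x$ avoids $p$. For a finite set $P$ of patterns, $a_P(n)$ denotes the number of ascent sequences of length $n$ avoiding every pattern in $P$. *)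

theory Defs
  imports Complex_Main
begin

definition asc :: "nat list \<Rightarrow> nat" where
  "asc s = card {j. Suc j < length s \<and> s ! j < s ! Suc j}"

definition ascent_seq :: "nat list \<Rightarrow> bool" where
  "ascent_seq x \<longleftrightarrow> x \<noteq> [] \<and> x ! 0 = 0 \<and>
     (\<forall>i. 0 < i \<and> i < length x \<longrightarrow> x ! i \<le> 1 + asc (take i x))"

definition red :: "nat list \<Rightarrow> nat list" where
  "red w = map (\<lambda>a. card {b \<in> set w. b < a}) w"

definition contains :: "nat list \<Rightarrow> nat list \<Rightarrow> bool" where
  "contains x p \<longleftrightarrow> (\<exists>is. length is = length p \<and> sorted_wrt (<) is \<and>
      (\<forall>i\<in>set is. i < length x) \<and> red (map (\<lambda>i. x ! i) is) = p)"

definition avoids :: "nat list \<Rightarrow> nat list \<Rightarrow> bool" where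
  "avoids x p \<longleftrightarrow> \<not> contains x p"

definition a_P :: "nat list set \<Rightarrow> nat \<Rightarrow> nat" where
  "a_P P n = card {x. ascent_seq x \<and> length x = n \<and> (\<forall>p\<in>P. avoids x p)}"

end

theory Submission
  imports Defs
begin

text \<open>An ascent sequence avoiding 0102 and 0121 is of one of two kinds: either it uses only the
letters 0 and 1, or it is a staircase \<open>0 = y\<^sub>1 \<le> \<dots> \<le> y\<^sub>L\<close>, whose consecutive letters are equal
or increase by one, of height \<open>y\<^sub>L \<ge> 2\<close>, followed by zeros. This is proved by appending one letter
at a time: every other extension allowed by the ascent condition completes one of the two patterns
with letters already present. There are \<open>2^(n-1)\<close> sequences of the first kind. A staircase of
length \<open>L\<close> is determined by its set of ascent positions, an arbitrary subset of an \<open>(L-1)\<close>-set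
whose cardinality is the height, so \<open>2^(L-1) - L\<close> staircases have height at least 2; summing
over \<open>L \<le> n\<close> gives the formula.\<close>

section \<open>Occurrences of patterns of length four\<close>

lemma strict_mono_on_card_less:
  fixes S :: "'a::linorder set"
  assumes "finite S"
  shows "strict_mono_on S (\<lambda>a. card {b \<in> S. b < a})"
proof (rule strict_mono_onI)
  fix a a' assume "a \<in> S" "a' \<in> S" "a < a'"
  then have "{b \<in> S. b < a} \<subset> {b \<in> S. b < a'}" by auto
  then show "card {b \<in> S. b < a} < card {b \<in> S. b < a'}"
    using assms by (intro psubset_card_mono) auto
qed

lemma red_nth_less_iff:
  assumes "i < length w" "j < length w"
  shows "red w ! i < red w ! j \<longleftrightarrow> w ! i < w ! j"
  using assms strict_mono_on_less[OF strict_mono_on_card_less[of "set w"]] by (simp add: red_def)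

lemma red_nth_eq_iff:
  assumes "i < length w" "j < length w"
  shows "red w ! i = red w ! j \<longleftrightarrow> w ! i = w ! j"
  using assms strict_mono_on_eq[OF strict_mono_on_card_less[of "set w"]] by (simp add: red_def)

lemma red_eq_0102_iff: "red [a, b, c, d] = [0, 1, 0, 2] \<longleftrightarrow> a < b \<and> c = a \<and> b < d"
proof
  assume r: "red [a, b, c, d] = [0, 1, 0, 2]"
  show "a < b \<and> c = a \<and> b < d"
    using red_nth_less_iff[of 0 "[a, b, c, d]" 1] red_nth_eq_iff[of 2 "[a, b, c, d]" 0]
      red_nth_less_iff[of 1 "[a, b, c, d]" 3] by (simp only: r) simp
next
  assume "a < b \<and> c = a \<and> b < d"
  moreover have "{y \<in> {a, b, d}. y < a} = {}" "{y \<in> {a, b, d}. y < b} = {a}"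
    "{y \<in> {a, b, d}. y < d} = {a, b}"
    using calculation by auto
  ultimately show "red [a, b, c, d] = [0, 1, 0, 2]" by (auto simp: red_def insert_commute)
qed

lemma red_eq_0121_iff: "red [a, b, c, d] = [0, 1, 2, 1] \<longleftrightarrow> a < b \<and> b < c \<and> d = b"
proof
  assume r: "red [a, b, c, d] = [0, 1, 2, 1]"
  show "a < b \<and> b < c \<and> d = b"
    using red_nth_less_iff[of 0 "[a, b, c, d]" 1] red_nth_less_iff[of 1 "[a, b, c, d]" 2]
      red_nth_eq_iff[of 3 "[a, b, c, d]" 1] by (simp only: r) simp
next
  assume "a < b \<and> b < c \<and> d = b"
  moreover have "{y \<in> {a, b, c}. y < a} = {}" "{y \<in> {a, b, c}. y < b} = {a}"
    "{y \<in> {a, b, c}. y < c} = {a, b}"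
    using calculation by auto
  ultimately show "red [a, b, c, d] = [0, 1, 2, 1]" by (auto simp: red_def insert_commute)
qed

lemma contains_length_4_iff:
  assumes "length p = 4"
  shows "contains x p \<longleftrightarrow>
    (\<exists>i j k l. i < j \<and> j < k \<and> k < l \<and> l < length x \<and> red [x ! i, x ! j, x ! k, x ! l] = p)"
    (is "_ \<longleftrightarrow> ?occurs")
proof
  assume "contains x p"
  then obtain "is" where "length is = 4" "sorted_wrt (<) is" "\<forall>i\<in>set is. i < length x"
    "red (map ((!) x) is) = p"
    using assms unfolding contains_def by auto
  moreover from \<open>length is = 4\<close> obtain i j k l where "is = [i, j, k, l]"
    by (auto simp: numeral_eq_Suc length_Suc_conv)
  ultimately show ?occurs
    by auto
next
  assume ?occurs
  then obtain i j k l where "i < j" "j < k" "k < l" "l < length x"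
    "red [x ! i, x ! j, x ! k, x ! l] = p"
    by blast
  then show "contains x p"
    unfolding contains_def using assms by (intro exI[of _ "[i, j, k, l]"]) auto
qed

lemma contains_0102_iff:
  "contains x [0, 1, 0, 2] \<longleftrightarrow>
    (\<exists>i j k l. i < j \<and> j < k \<and> k < l \<and> l < length x \<and> x ! i < x ! j \<and> x ! k = x ! i \<and> x ! j < x ! l)"
  using contains_length_4_iff[of "[0, 1, 0, 2]" x] unfolding red_eq_0102_iff by simp

lemma contains_0121_iff:
  "contains x [0, 1, 2, 1] \<longleftrightarrow>
    (\<exists>i j k l. i < j \<and> j < k \<and> k < l \<and> l < length x \<and> x ! i < x ! j \<and> x ! j < x ! k \<and> x ! l = x ! j)"
  using contains_length_4_iff[of "[0, 1, 2, 1]" x] unfolding red_eq_0121_iff by simp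

lemma contains_append:
  assumes "contains x p"
  shows "contains (x @ y) p"
proof -
  obtain "is" where "length is = length p" "sorted_wrt (<) is" "\<forall>i\<in>set is. i < length x"
    "red (map ((!) x) is) = p"
    using assms unfolding contains_def by blast
  moreover from this(3,4) have "red (map ((!) (x @ y)) is) = p"
    by (metis map_eq_conv nth_append)
  ultimately show ?thesis
    unfolding contains_def by (intro exI[of _ "is"]) auto
qed

section \<open>Ascent sequences and staircases\<close>

lemma ascent_seq_snoc:
  "ascent_seq (x @ [v]) \<longleftrightarrow> (x = [] \<and> v = 0) \<or> (ascent_seq x \<and> v \<le> Suc (asc x))"
proof (cases "x = []")
  case False
  have "(\<forall>i. 0 < i \<and> i < Suc (length x) \<longrightarrow> (x @ [v]) ! i \<le> 1 + asc (take i (x @ [v]))) \<longleftrightarrow>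
    (\<forall>i. 0 < i \<and> i < length x \<longrightarrow> x ! i \<le> 1 + asc (take i x)) \<and> v \<le> Suc (asc x)"
    using False by (fastforce simp: nth_append less_Suc_eq)
  with False show ?thesis
    by (simp add: ascent_seq_def nth_append)
qed (simp add: ascent_seq_def)

lemma ascent_seq_append_replicate_0:
  "ascent_seq x \<Longrightarrow> ascent_seq (x @ replicate k 0)"
proof (induction k)
  case (Suc k)
  have "x @ replicate (Suc k) 0 = (x @ replicate k 0) @ [0]"
    by (simp add: replicate_append_same)
  then show ?case
    using Suc ascent_seq_snoc[of "x @ replicate k 0" 0] by simp
qed simp

definition staircase :: "nat list \<Rightarrow> bool" where
  "staircase = successively (\<lambda>a b. b = a \<or> b = Suc a)"

definition ascent_set :: "nat list \<Rightarrow> nat set" where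
  "ascent_set y = {j. Suc j < length y \<and> y ! j < y ! Suc j}"

lemma staircase_snoc:
  "staircase (y @ [v]) \<longleftrightarrow> staircase y \<and> (y \<noteq> [] \<longrightarrow> v = last y \<or> v = Suc (last y))"
  by (auto simp: staircase_def successively_append_iff)

lemma staircase_nth_Suc:
  "staircase y \<Longrightarrow> Suc i < length y \<Longrightarrow> y ! Suc i = y ! i \<or> y ! Suc i = Suc (y ! i)"
  unfolding staircase_def by (rule successively_nth)

lemma sorted_if_staircase: "staircase y \<Longrightarrow> sorted y"
  unfolding staircase_def
  by (subst successively_conv_sorted_wrt[symmetric]) (auto elim: successively_mono)

lemma staircase_if_sorted_01:
  assumes "sorted y" "set y \<subseteq> {0, 1}"
  shows "staircase y"
proof -
  have "successively (\<le>) y"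
    using assms(1) by (simp add: successively_conv_sorted_wrt)
  then show ?thesis
    unfolding staircase_def by (rule successively_mono) (use assms(2) in auto)
qed

lemma staircase_intermediate_value:
  assumes "staircase y" "y \<noteq> []" "hd y \<le> v" "v \<le> last y"
  shows "v \<in> set y"
  using assms
proof (induction y rule: rev_induct)
  case (snoc w y)
  then show ?case
    by (cases "y \<noteq> [] \<and> v \<le> last y") (auto simp: staircase_snoc)
qed simp

lemma card_filter_less_Suc:
  assumes "finite D"
  shows "card {d \<in> D. d < Suc i} = card {d \<in> D. d < i} + (if i \<in> D then 1 else 0)"
proof -
  have "{d \<in> D. d < Suc i} = {d \<in> D. d < i} \<union> (if i \<in> D then {i} else {})"
    by (auto simp: less_Suc_eq)
  with assms show ?thesis
    by simp
qed

lemma finite_ascent_set: "finite (ascent_set y)"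
  by (rule finite_subset[of _ "{..<length y}"]) (auto simp: ascent_set_def)

lemma staircase_nth_eq_card:
  assumes "staircase y" "y ! 0 = 0" "i < length y"
  shows "y ! i = card {j \<in> ascent_set y. j < i}"
  using assms(3)
proof (induction i)
  case (Suc i)
  then have "y ! Suc i = y ! i \<or> y ! Suc i = Suc (y ! i)"
    using staircase_nth_Suc[OF assms(1)] by blast
  then show ?case
    using Suc card_filter_less_Suc[OF finite_ascent_set, of y i] by (auto simp: ascent_set_def)
qed (simp add: assms(2))

lemma asc_staircase:
  assumes "staircase y" "y \<noteq> []" "hd y = 0"
  shows "asc y = last y"
proof -
  have "{j \<in> ascent_set y. j < length y - 1} = ascent_set y"
    by (auto simp: ascent_set_def)
  then show ?thesis
    using staircase_nth_eq_card[OF assms(1), of "length y - 1"] assms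
    by (simp add: asc_def ascent_set_def last_conv_nth hd_conv_nth)
qed

lemma ascent_seq_if_staircase:
  "staircase y \<Longrightarrow> y \<noteq> [] \<Longrightarrow> hd y = 0 \<Longrightarrow> ascent_seq y"
proof (induction y rule: rev_induct)
  case (snoc v y)
  show ?case
  proof (cases "y = []")
    case False
    then show ?thesis
      using snoc asc_staircase[of y] by (auto simp: ascent_seq_snoc staircase_snoc)
  qed (use snoc.prems in \<open>simp add: ascent_seq_def\<close>)
qed simp

section \<open>The two kinds of avoiders\<close>

definition binary_seq :: "nat list \<Rightarrow> bool" where
  "binary_seq x \<longleftrightarrow> x \<noteq> [] \<and> hd x = 0 \<and> set x \<subseteq> {0, 1}"

definition tall_staircase :: "nat list \<Rightarrow> bool" where
  "tall_staircase y \<longleftrightarrow> staircase y \<and> y \<noteq> [] \<and> hd y = 0 \<and> 2 \<le> last y"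

definition padded_staircase :: "nat list \<Rightarrow> bool" where
  "padded_staircase x \<longleftrightarrow> (\<exists>y k. tall_staircase y \<and> x = y @ replicate k 0)"

lemma binary_seq_snoc_cases:
  assumes "binary_seq x" "ascent_seq (x @ [v])" "\<not> contains (x @ [v]) [0, 1, 0, 2]"
  shows "binary_seq (x @ [v]) \<or> tall_staircase (x @ [v])"
proof (cases "v \<le> 1")
  case True
  with assms(1) show ?thesis by (auto simp: binary_seq_def)
next
  case False
  have x: "x \<noteq> []" "hd x = 0" "set x \<subseteq> {0, 1}"
    using assms(1) by (auto simp: binary_seq_def)
  have "sorted x"
    unfolding sorted_iff_nth_mono_less
  proof (intro allI impI leI notI)
    fix i j assume ij: "i < j" "j < length x" "x ! j < x ! i"
    moreover have "x ! i \<in> {0, 1}" "x ! j \<in> {0, 1}"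
      using ij x(3) by (meson less_trans nth_mem subsetD)+
    moreover have "x ! 0 = 0"
      using x by (simp add: hd_conv_nth)
    ultimately have "0 < i" "x ! i = 1" "x ! j = 0"
      by (auto intro: gr0I)
    then have "contains (x @ [v]) [0, 1, 0, 2]"
      unfolding contains_0102_iff using False ij \<open>x ! 0 = 0\<close>
      by (intro exI[of _ 0] exI[of _ i] exI[of _ j] exI[of _ "length x"]) (auto simp: nth_append)
    with assms(3) show False ..
  qed
  then have "staircase x"
    using x(3) by (rule staircase_if_sorted_01)
  moreover have "last x \<le> 1"
    using x(1,3) last_in_set[of x] by fastforce
  moreover have "v \<le> Suc (last x)"
    using assms(2) x asc_staircase[OF \<open>staircase x\<close>] by (simp add: ascent_seq_snoc)
  ultimately show ?thesis
    using False x by (auto simp: tall_staircase_def staircase_snoc)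
qed

lemma tall_staircase_snoc:
  assumes "tall_staircase y" "ascent_seq (y @ [v])" "\<not> contains (y @ [v]) [0, 1, 2, 1]" "0 < v"
  shows "tall_staircase (y @ [v])"
proof -
  have y: "staircase y" "y \<noteq> []" "hd y = 0" "2 \<le> last y"
    using assms(1) by (auto simp: tall_staircase_def)
  have "v \<le> Suc (last y)"
    using assms(2) y(2) asc_staircase[OF y(1-3)] by (simp add: ascent_seq_snoc)
  moreover have "\<not> v < last y"
  proof
    assume "v < last y"
    then obtain j where j: "j < length y" "y ! j = v"
      using staircase_intermediate_value[OF y(1,2), of v] y(3) by (auto simp: in_set_conv_nth)
    have "y ! 0 = 0" "y ! (length y - 1) = last y"
      using y(2,3) by (simp_all add: hd_conv_nth last_conv_nth)
    moreover have "j \<noteq> length y - 1"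
      using j(2) \<open>v < last y\<close> \<open>y ! (length y - 1) = last y\<close> by auto
    ultimately have "0 < j" "j < length y - 1"
      using j assms(4) by (auto intro: gr0I)
    with j have "contains (y @ [v]) [0, 1, 2, 1]"
      unfolding contains_0121_iff using \<open>y ! 0 = 0\<close> \<open>y ! (length y - 1) = last y\<close> \<open>v < last y\<close> assms(4)
      by (intro exI[of _ 0] exI[of _ j] exI[of _ "length y - 1"] exI[of _ "length y"])
        (auto simp: nth_append)
    with assms(3) show False ..
  qed
  ultimately show ?thesis
    using y by (auto simp: tall_staircase_def staircase_snoc)
qed

lemma padded_staircase_snoc_eq_0:
  fixes y :: "nat list" and k v :: nat
  defines "x \<equiv> y @ replicate k 0 @ [v]"
  assumes "tall_staircase y" "0 < k"
    and "\<not> contains x [0, 1, 0, 2]" "\<not> contains x [0, 1, 2, 1]"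
  shows "v = 0"
proof (rule ccontr)
  assume "v \<noteq> 0"
  have y: "staircase y" "y \<noteq> []" "hd y = 0" "2 \<le> last y"
    using assms(2) by (auto simp: tall_staircase_def)
  obtain j1 where j1: "j1 < length y" "y ! j1 = 1"
    using staircase_intermediate_value[OF y(1,2), of 1] y(3,4) by (auto simp: in_set_conv_nth)
  obtain j2 where j2: "j2 < length y" "y ! j2 = 2"
    using staircase_intermediate_value[OF y(1,2), of 2] y(3,4) by (auto simp: in_set_conv_nth)
  have "y ! 0 = 0"
    using y(2,3) by (simp add: hd_conv_nth)
  then have "0 < j1"
    using j1 by (auto intro: gr0I)
  have "j1 < j2"
    using sorted_nth_mono[OF sorted_if_staircase[OF y(1)], of j2 j1] j1 j2 by force
  define n where "n = length y + k"
  have x: "x ! 0 = 0" "x ! j1 = 1" "x ! j2 = 2" "x ! (n - 1) = 0" "x ! n = v" "length x = Suc n"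
    using j1 j2 \<open>y ! 0 = 0\<close> assms(3) y(2) by (auto simp: x_def n_def nth_append)
  show False
  proof (cases "v = 1")
    case True
    then have "contains x [0, 1, 2, 1]"
      unfolding contains_0121_iff using x \<open>0 < j1\<close> \<open>j1 < j2\<close> j2(1)
      by (intro exI[of _ 0] exI[of _ j1] exI[of _ j2] exI[of _ n]) (auto simp: n_def)
    with assms(5) show False ..
  next
    case False
    then have "contains x [0, 1, 0, 2]"
      unfolding contains_0102_iff using x \<open>0 < j1\<close> j1(1) assms(3) \<open>v \<noteq> 0\<close>
      by (intro exI[of _ 0] exI[of _ j1] exI[of _ "n - 1"] exI[of _ n]) (auto simp: n_def)
    with assms(4) show False ..
  qed
qed

lemma padded_staircase_if_tall_staircase: "tall_staircase y \<Longrightarrow> padded_staircase y"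
  unfolding padded_staircase_def by (metis append.right_neutral replicate_0)

lemma padded_staircase_snoc:
  assumes "padded_staircase x" "ascent_seq (x @ [v])"
    and "\<not> contains (x @ [v]) [0, 1, 0, 2]" "\<not> contains (x @ [v]) [0, 1, 2, 1]"
  shows "padded_staircase (x @ [v])"
proof -
  obtain y k where y: "tall_staircase y" and x: "x = y @ replicate k 0"
    using assms(1) unfolding padded_staircase_def by blast
  show ?thesis
  proof (cases "v = 0")
    case True
    then have "x @ [v] = y @ replicate (Suc k) 0"
      using x by (simp add: replicate_append_same)
    with y show ?thesis
      unfolding padded_staircase_def by blast
  next
    case False
    then have "k = 0"
      using padded_staircase_snoc_eq_0[OF y, of k v] assms(3,4) x by auto
    then show ?thesis
      using tall_staircase_snoc[OF y, of v] assms(2,4) x False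
      by (simp add: padded_staircase_if_tall_staircase)
  qed
qed

lemma avoiding_ascent_seq_cases:
  assumes "ascent_seq x" "\<not> contains x [0, 1, 0, 2]" "\<not> contains x [0, 1, 2, 1]"
  shows "binary_seq x \<or> padded_staircase x"
  using assms
proof (induction x rule: rev_induct)
  case (snoc v x)
  show ?case
  proof (cases "x = []")
    case True
    then show ?thesis
      using snoc.prems(1) by (simp add: binary_seq_def ascent_seq_def)
  next
    case False
    then have "binary_seq x \<or> padded_staircase x"
      using snoc contains_append[of x "[0, 1, 0, 2]" "[v]"] contains_append[of x "[0, 1, 2, 1]" "[v]"]
      by (auto simp: ascent_seq_snoc)
    then show ?thesis
      using binary_seq_snoc_cases padded_staircase_snoc padded_staircase_if_tall_staircase snoc.prems
      by blast
  qed
qed (simp add: ascent_seq_def)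

lemma binary_seq_avoiding:
  assumes "binary_seq x"
  shows "ascent_seq x" "\<not> contains x [0, 1, 0, 2]" "\<not> contains x [0, 1, 2, 1]"
proof -
  have le_1: "x ! i \<le> 1" if "i < length x" for i
    using assms nth_mem[OF that] by (fastforce simp: binary_seq_def)
  then show "ascent_seq x"
    using assms by (fastforce simp: binary_seq_def ascent_seq_def hd_conv_nth)
  have no_chain: False if "x ! i < x ! j" "x ! j < x ! l" "i < length x" "j < length x" "l < length x"
    for i j l
    using that le_1[of l] by linarith
  show "\<not> contains x [0, 1, 0, 2]" "\<not> contains x [0, 1, 2, 1]"
    unfolding contains_0102_iff contains_0121_iff
    by (auto intro: no_chain)
qed

lemma padded_staircase_avoiding:
  assumes "padded_staircase x"
  shows "ascent_seq x" "\<not> contains x [0, 1, 0, 2]" "\<not> contains x [0, 1, 2, 1]"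
proof -
  obtain y k where y: "staircase y" "y \<noteq> []" "hd y = 0" and x: "x = y @ replicate k 0"
    using assms by (auto simp: padded_staircase_def tall_staircase_def)
  then show "ascent_seq x"
    by (simp add: ascent_seq_if_staircase ascent_seq_append_replicate_0)
  have in_y: "x ! i = y ! i" if "i < length y" for i
    using that by (simp add: x nth_append)
  have pos_in_y: "l < length y" if "0 < x ! l" "l < length x" for l
    using that by (auto simp: x nth_append split: if_splits)
  have mono: "x ! j \<le> x ! k" if "j \<le> k" "k \<le> l" "0 < x ! l" "l < length x" for j k l
    using that pos_in_y[of l] in_y sorted_nth_mono[OF sorted_if_staircase[OF y(1)], of j k] by simp
  show "\<not> contains x [0, 1, 0, 2]"
  proof
    assume "contains x [0, 1, 0, 2]"
    then obtain i j k l where "j < k" "k < l" "l < length x"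
      "x ! i < x ! j" "x ! k = x ! i" "x ! j < x ! l"
      unfolding contains_0102_iff by blast
    then show False
      using mono[of j k l] by simp
  qed
  show "\<not> contains x [0, 1, 2, 1]"
  proof
    assume "contains x [0, 1, 2, 1]"
    then obtain i j k l where "k < l" "l < length x" "x ! i < x ! j" "x ! j < x ! k" "x ! l = x ! j"
      unfolding contains_0121_iff by blast
    then show False
      using mono[of k l l] by simp
  qed
qed

section \<open>Enumeration\<close>

lemma card_binary_seq:
  assumes "0 < n"
  shows "card {x. binary_seq x \<and> length x = n} = 2 ^ (n - 1)"
proof -
  have "{x. binary_seq x \<and> length x = n} = (#) 0 ` {ys. set ys \<subseteq> {0, 1} \<and> length ys = n - 1}"
  proof (intro equalityI subsetI)
    fix x assume "x \<in> {x. binary_seq x \<and> length x = n}"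
    then show "x \<in> (#) 0 ` {ys. set ys \<subseteq> {0, 1} \<and> length ys = n - 1}"
      by (cases x) (auto simp: binary_seq_def)
  qed (use assms in \<open>auto simp: binary_seq_def\<close>)
  moreover have "card {ys. set ys \<subseteq> {0, 1 :: nat} \<and> length ys = n - 1} = 2 ^ (n - 1)"
    by (simp add: card_lists_length_eq numeral_2_eq_2)
  ultimately show ?thesis
    by (simp add: card_image)
qed

definition staircase_of :: "nat \<Rightarrow> nat set \<Rightarrow> nat list" where
  "staircase_of n D = map (\<lambda>i. card {j \<in> D. j < i}) [0..<n]"

lemma length_staircase_of [simp]: "length (staircase_of n D) = n"
  by (simp add: staircase_of_def)

lemma nth_staircase_of [simp]: "i < n \<Longrightarrow> staircase_of n D ! i = card {j \<in> D. j < i}"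
  by (simp add: staircase_of_def)

lemma ascent_set_staircase_of:
  assumes "D \<subseteq> {..<n - 1}"
  shows "ascent_set (staircase_of n D) = D"
proof -
  have "finite D"
    using assms finite_subset by blast
  then have "ascent_set (staircase_of n D) = {j. Suc j < n \<and> j \<in> D}"
    by (auto simp: ascent_set_def card_filter_less_Suc split: if_splits)
  also have "\<dots> = D"
    using assms by auto
  finally show ?thesis .
qed

lemma tall_staircase_staircase_of:
  assumes "D \<subseteq> {..<n - 1}" "2 \<le> card D"
  shows "tall_staircase (staircase_of n D)"
proof -
  have "finite D"
    using assms finite_subset by blast
  have "2 \<le> n - 1"
    using card_mono[OF _ assms(1)] assms(2) by simp
  then have ne: "staircase_of n D \<noteq> []"
    by (auto simp: staircase_of_def)
  have "{j \<in> D. j < n - 1} = D"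
    using assms(1) by auto
  then have "last (staircase_of n D) = card D"
    using ne \<open>2 \<le> n - 1\<close> by (simp add: last_conv_nth)
  moreover have "hd (staircase_of n D) = 0"
    using ne \<open>2 \<le> n - 1\<close> by (simp add: hd_conv_nth)
  moreover have "staircase (staircase_of n D)"
    unfolding staircase_def successively_conv_nth
    by (auto simp: card_filter_less_Suc[OF \<open>finite D\<close>])
  ultimately show ?thesis
    using ne assms(2) by (simp add: tall_staircase_def)
qed

lemma staircase_of_ascent_set:
  assumes "tall_staircase y"
  shows "staircase_of (length y) (ascent_set y) = y"
proof (rule nth_equalityI)
  have "y ! 0 = 0"
    using assms by (auto simp: tall_staircase_def hd_conv_nth)
  then show "staircase_of (length y) (ascent_set y) ! i = y ! i"
    if "i < length (staircase_of (length y) (ascent_set y))" for i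
    using that assms staircase_nth_eq_card[of y i] by (simp add: tall_staircase_def)
qed simp

lemma bij_betw_ascent_set:
  "bij_betw ascent_set {y. tall_staircase y \<and> length y = n} {D. D \<subseteq> {..<n - 1} \<and> 2 \<le> card D}"
proof (rule bij_betw_byWitness[where f' = "staircase_of n"])
  show "ascent_set ` {y. tall_staircase y \<and> length y = n} \<subseteq> {D. D \<subseteq> {..<n - 1} \<and> 2 \<le> card D}"
    using asc_staircase by (auto simp: tall_staircase_def asc_def ascent_set_def[symmetric])
      (auto simp: ascent_set_def)
qed (auto simp: staircase_of_ascent_set ascent_set_staircase_of tall_staircase_staircase_of)

lemma card_subsets_card_ge_2:
  assumes "finite S"
  shows "card {D. D \<subseteq> S \<and> 2 \<le> card D} = 2 ^ card S - card S - 1"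
proof -
  have "Pow S = {D. D \<subseteq> S \<and> 2 \<le> card D} \<union> ({D. D \<subseteq> S \<and> card D = 0} \<union> {D. D \<subseteq> S \<and> card D = 1})"
    by auto
  then have "2 ^ card S = card {D. D \<subseteq> S \<and> 2 \<le> card D} + (1 + card S)"
    using assms card_Pow[of S] n_subsets[OF assms, of 0] n_subsets[OF assms, of 1]
    by (simp add: card_Un_disjoint disjoint_iff)
  then show ?thesis
    by simp
qed

lemma card_tall_staircase:
  assumes "0 < n"
  shows "card {y. tall_staircase y \<and> length y = n} = 2 ^ (n - 1) - n"
  using bij_betw_same_card[OF bij_betw_ascent_set] card_subsets_card_ge_2[of "{..<n - 1}"] assms
  by simp

lemma finite_tall_staircase: "finite {y. tall_staircase y \<and> length y = n}"
  using bij_betw_finite[OF bij_betw_ascent_set] by simp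

lemma padded_staircase_length_eq_UN:
  "{x. padded_staircase x \<and> length x = n} =
    (\<Union>L\<in>{1..n}. (\<lambda>y. y @ replicate (n - L) 0) ` {y. tall_staircase y \<and> length y = L})"
proof (intro equalityI subsetI)
  fix x assume "x \<in> {x. padded_staircase x \<and> length x = n}"
  then obtain y k where "tall_staircase y" "x = y @ replicate k 0" "length x = n"
    unfolding padded_staircase_def by blast
  then show "x \<in> (\<Union>L\<in>{1..n}. (\<lambda>y. y @ replicate (n - L) 0) ` {y. tall_staircase y \<and> length y = L})"
    by (intro UN_I[of "length y"]) (auto simp: tall_staircase_def Suc_le_eq)
qed (auto simp: padded_staircase_def)

lemma card_padded_staircase:
  "card {x. padded_staircase x \<and> length x = n} = (\<Sum>L = 1..n. 2 ^ (L - 1) - L)"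
proof -
  define P where "P L = (\<lambda>y. y @ replicate (n - L) 0) ` {y. tall_staircase y \<and> length y = L}" for L
  have shape: "2 \<le> x ! (L - 1)" "L \<le> i \<Longrightarrow> i < n \<Longrightarrow> x ! i = 0"
    if x: "x \<in> P L" and L: "1 \<le> L" for x L i
  proof -
    obtain y where y: "tall_staircase y" "length y = L" "x = y @ replicate (n - L) 0"
      using x unfolding P_def by blast
    then have "x ! (L - 1) = last y"
      using L by (auto simp: nth_append last_conv_nth tall_staircase_def)
    then show "2 \<le> x ! (L - 1)" "L \<le> i \<Longrightarrow> i < n \<Longrightarrow> x ! i = 0"
      using y by (auto simp: nth_append tall_staircase_def)
  qed
  have disj: "P L \<inter> P L' = {}" if "L \<in> {1..n}" "L' \<in> {1..n}" "L < L'" for L L'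
    using shape(1)[of _ L'] shape(2)[of _ L "L' - 1"] that by fastforce
  have "\<forall>L\<in>{1..n}. \<forall>L'\<in>{1..n}. L \<noteq> L' \<longrightarrow> P L \<inter> P L' = {}"
    using disj by (metis inf_commute linorder_neqE_nat)
  moreover have "card (P L) = 2 ^ (L - 1) - L" if "L \<in> {1..n}" for L
    unfolding P_def using that card_tall_staircase[of L]
    by (subst card_image) (auto intro: inj_onI)
  ultimately show ?thesis
    unfolding padded_staircase_length_eq_UN P_def[symmetric]
    by (simp add: card_UN_disjoint P_def finite_tall_staircase)
qed

lemma finite_padded_staircase: "finite {x. padded_staircase x \<and> length x = n}"
  by (simp add: padded_staircase_length_eq_UN finite_tall_staircase)

lemma binary_seq_not_padded_staircase:
  assumes "binary_seq x"
  shows "\<not> padded_staircase x"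
proof
  assume "padded_staircase x"
  then obtain y k where "tall_staircase y" "x = y @ replicate k 0"
    unfolding padded_staircase_def by blast
  then have "last y \<in> set x" "2 \<le> last y"
    by (auto simp: tall_staircase_def)
  with assms show False
    unfolding binary_seq_def by auto
qed

lemma real_sum_pow2_minus:
  "real (\<Sum>L = 1..n. 2 ^ (L - 1) - L) = 2 ^ n - 1 - real n * (real n + 1) / 2"
proof (induction n)
  case (Suc n)
  have "Suc n \<le> 2 ^ n"
    by (rule Suc_leI, rule less_exp)
  with Suc show ?case
    by (simp add: of_nat_diff field_simps)
qed simp

theorem theorem3p5:
  fixes n :: nat
  assumes "n \<ge> 1"
  shows "real (a_P {[0,1,0,2], [0,1,2,1]} n) = (3 * 2 ^ n - real n ^ 2 - real n - 2) / 2"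
proof -
  let ?B = "{x. binary_seq x \<and> length x = n}" and ?S = "{x. padded_staircase x \<and> length x = n}"
  have avoiders: "{x. ascent_seq x \<and> length x = n \<and> (\<forall>p\<in>{[0,1,0,2], [0,1,2,1]}. avoids x p)} =
      ?B \<union> ?S"
    using avoiding_ascent_seq_cases binary_seq_avoiding padded_staircase_avoiding
    by (auto simp: avoids_def)
  have "finite ?B"
    using card_binary_seq[of n] assms by (intro card_ge_0_finite) simp
  then have "a_P {[0,1,0,2], [0,1,2,1]} n = card ?B + card ?S"
    unfolding a_P_def avoiders using finite_padded_staircase binary_seq_not_padded_staircase
    by (intro card_Un_disjoint) auto
  also have "\<dots> = 2 ^ (n - 1) + (\<Sum>L = 1..n. 2 ^ (L - 1) - L)"
    using assms by (simp add: card_binary_seq card_padded_staircase)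
  finally have "real (a_P {[0,1,0,2], [0,1,2,1]} n) =
      2 ^ (n - 1) + 2 ^ n - 1 - real n * (real n + 1) / 2"
    using real_sum_pow2_minus[of n] by simp
  moreover obtain m where "n = Suc m"
    using assms by (cases n) auto
  ultimately show ?thesis
    by (simp add: field_simps power2_eq_square)
qed

end
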